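(* Let $\mathcal{STAB}$ be the set of channels $\rho\mapsto U\rho U^\dagger$ with $U$ in the $n$-qubit Clifford group, let $\Phi_T$ be the channel $\rho\mapsto T_1\rho T_1^\dagger$ where $T_1$ is $T=\mathrm{diag}(1,e^{i\pi/4})$ acting on the first qubit, and let $\mathcal{STAB}^{(k)}_T$ be the set of all finite compositions of elements of $\mathcal{STAB}\cup\{\Phi_T\}$ in which $\Phi_T$ appears at most $k$ times. Then the free robustness of $\Phi_T$ with respect to $\mathcal{STAB}$ satisfies $\gamma(\Phi_T)\le\sqrt2/2$, and for every sample $S=(z_1,\ldots,z_m)$, \[ \hat{R}_S(\mathcal{F}(\mathcal{STAB}\cup\{\Phi_T\}))\le\Big(1+\tfrac{\sqrt2}{2}\Big)\hat{R}_S(\mathcal{F}(\mathcal{STAB})),\qquad \hat{R}_S(\mathcal{F}(\mathcal{STAB}^{(k)}_T))\le(1+\sqrt2)^k\,\hat{R}_S(\mathcal{F}(\mathcal{STAB})). \] In particular $\hat{R}_S(\mathcal{F}(\mathcal{STAB}^{(k)}_T))\le C\,(1+\sqrt2)^k\frac{n}{\sqrt m}\max_{\Phi\in\mathcal{STAB}}\|\vec f_\Phi\|_\infty$ for an absolute constant $C$.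
   Context: For a channel $\Phi$ on $n$ qubits, $f_\Phi(x,y)=\mathrm{Tr}[\Phi(|x\rangle\langle x|)\,|y\rangle\langle y|]$ for $x,y\in\mathbb{F}_2^n$; $\mathcal{F}(\Omega)=\{f_\Phi:\Phi\in\Omega\}$; $\vec f_\Phi=(f_\Phi(z_1),\ldots,f_\Phi(z_m))$. Empirical Rademacher complexity: $\hat{R}_S(\mathcal{G})=\mathbb{E}_{\epsilon}[\sup_{g\in\mathcal{G}}\frac1m\sum_i\epsilon_i g(z_i)]$, $\epsilon_i$ i.i.d. uniform on $\{\pm1\}$. Free robustness w.r.t. a set $\mathcal{O}$ of channels: $\gamma(\Psi)=\inf\{\lambda\ge0:\exists\,\Phi\in\mathrm{Conv}(\mathcal{O}),\ (\Psi+\lambda\Phi)/(1+\lambda)\in\mathrm{Conv}(\mathcal{O})\}$. *)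

theory Defs
  imports Complex_Main "HOL-Library.FuncSet"
begin

text \<open>A bitstring x in F_2^n is identified with the natural number
  x < 2^n whose bit j (j = 0..n-1) is the (j+1)-th coordinate of x; in particular the
  first qubit corresponds to bit 0. Operators on n qubits are 2^n x 2^n complex
  matrices, represented as functions nat => nat => complex (entries outside the range
  are irrelevant / produced as 0).\<close>

type_synonym cmat = "nat \<Rightarrow> nat \<Rightarrow> complex"
type_synonym chan = "cmat \<Rightarrow> cmat"

definition mmult :: "nat \<Rightarrow> cmat \<Rightarrow> cmat \<Rightarrow> cmat" where
  "mmult N A B = (\<lambda>i j. if i < N \<and> j < N then (\<Sum>k<N. A i k * B k j) else 0)"

definition adjoint :: "cmat \<Rightarrow> cmat" where
  "adjoint A = (\<lambda>i j. cnj (A j i))"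

definition idm :: "nat \<Rightarrow> cmat" where
  "idm N = (\<lambda>i j. if i < N \<and> j < N \<and> i = j then 1 else 0)"

definition unitary_mat :: "nat \<Rightarrow> cmat \<Rightarrow> bool" where
  "unitary_mat N U \<longleftrightarrow> mmult N U (adjoint U) = idm N \<and> mmult N (adjoint U) U = idm N"

text \<open>Pauli operator i^c X^a Z^b on n qubits: entry (x,y) is
  i^c [x = y xor a] (-1)^(b.y).\<close>
definition pauli :: "nat \<Rightarrow> nat \<Rightarrow> nat \<Rightarrow> nat \<Rightarrow> cmat" where
  "pauli n c a b = (\<lambda>x y. if x < 2^n \<and> y < 2^n \<and> x = Bit_Operations.xor y a
      then \<i> ^ c * (-1) ^ card {j. j < n \<and> bit b j \<and> bit y j} else 0)"

definition pauli_group :: "nat \<Rightarrow> cmat set" where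
  "pauli_group n = {pauli n c a b | c a b. c < 4 \<and> a < 2^n \<and> b < 2^n}"

definition clifford :: "nat \<Rightarrow> cmat set" where
  "clifford n = {U. unitary_mat (2^n) U \<and>
      (\<forall>P\<in>pauli_group n. mmult (2^n) (mmult (2^n) U P) (adjoint U) \<in> pauli_group n)}"

definition unitary_channel :: "nat \<Rightarrow> cmat \<Rightarrow> chan" where
  "unitary_channel N U = (\<lambda>\<rho>. mmult N (mmult N U \<rho>) (adjoint U))"

definition STAB :: "nat \<Rightarrow> chan set" where
  "STAB n = unitary_channel (2^n) ` clifford n"

definition T_gate :: "nat \<Rightarrow> cmat" where
  "T_gate n = (\<lambda>i j. if i < 2^n \<and> j < 2^n \<and> i = j
      then (if bit i 0 then exp (\<i> * complex_of_real (pi / 4)) else 1) else 0)"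

definition Phi_T :: "nat \<Rightarrow> chan" where
  "Phi_T n = unitary_channel (2^n) (T_gate n)"

definition comp_chans :: "chan list \<Rightarrow> chan" where
  "comp_chans ls = foldr (\<circ>) ls id"

definition STAB_T :: "nat \<Rightarrow> nat \<Rightarrow> chan set" where
  "STAB_T n k = {comp_chans ls | ls. set ls \<subseteq> STAB n \<union> {Phi_T n}
      \<and> length (filter (\<lambda>\<Phi>. \<Phi> = Phi_T n) ls) \<le> k}"

definition conv_chans :: "chan set \<Rightarrow> chan set" where
  "conv_chans Os = {\<Phi>. \<exists>(l::nat) (c::nat \<Rightarrow> real) \<Psi>. (\<forall>i<l. c i \<ge> 0 \<and> \<Psi> i \<in> Os) \<and>
      (\<Sum>i<l. c i) = 1 \<and>
      \<Phi> = (\<lambda>\<rho> x y. \<Sum>i<l. complex_of_real (c i) * \<Psi> i \<rho> x y)}"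

definition free_robustness :: "chan set \<Rightarrow> chan \<Rightarrow> real" where
  "free_robustness Os \<Psi> = Inf {lam. lam \<ge> 0 \<and> (\<exists>\<Phi>\<in>conv_chans Os.
      (\<lambda>\<rho> x y. (\<Psi> \<rho> x y + complex_of_real lam * \<Phi> \<rho> x y) / complex_of_real (1 + lam))
        \<in> conv_chans Os)}"

definition ket_bra :: "nat \<Rightarrow> cmat" where
  "ket_bra x = (\<lambda>i j. if i = x \<and> j = x then 1 else 0)"

definition mtrace :: "nat \<Rightarrow> cmat \<Rightarrow> complex" where
  "mtrace N A = (\<Sum>i<N. A i i)"

text \<open>f_Phi(x,y) = Tr[Phi(|x><x|) |y><y|] (real part; it is real for channels).\<close>
definition f_chan :: "nat \<Rightarrow> chan \<Rightarrow> nat \<times> nat \<Rightarrow> real" where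
  "f_chan n \<Phi> = (\<lambda>(x, y). Re (mtrace (2^n) (mmult (2^n) (\<Phi> (ket_bra x)) (ket_bra y))))"

definition F_class :: "nat \<Rightarrow> chan set \<Rightarrow> (nat \<times> nat \<Rightarrow> real) set" where
  "F_class n \<Omega> = f_chan n ` \<Omega>"

text \<open>Empirical Rademacher complexity of G on the sample z 0, ..., z (m-1);
  the expectation over uniform signs is the average over all sign vectors.\<close>
definition rademacher :: "nat \<Rightarrow> (nat \<Rightarrow> nat \<times> nat) \<Rightarrow> (nat \<times> nat \<Rightarrow> real) set \<Rightarrow> real" where
  "rademacher m z G = (\<Sum>\<epsilon>\<in>PiE {..<m} (\<lambda>_. {-1, 1::real}).
      (SUP g\<in>G. (\<Sum>i<m. \<epsilon> i * g (z i)) / real m)) / 2 ^ m"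

definition valid_sample :: "nat \<Rightarrow> nat \<Rightarrow> (nat \<Rightarrow> nat \<times> nat) \<Rightarrow> bool" where
  "valid_sample n m z \<longleftrightarrow> (\<forall>i<m. fst (z i) < 2^n \<and> snd (z i) < 2^n)"

definition sup_norm_vec :: "nat \<Rightarrow> (nat \<Rightarrow> nat \<times> nat) \<Rightarrow> (nat \<times> nat \<Rightarrow> real) \<Rightarrow> real" where
  "sup_norm_vec m z g = Max ((\<lambda>i. \<bar>g (z i)\<bar>) ` {..<m})"

end

theory Submission
  imports Defs "HOL-Probability.Hoeffding" "HOL-Library.Nat_Bijection"
begin

text \<open>
  Conjugation by T on the first qubit equals sqrt 2/2 id + 1/2 S - (sqrt 2 - 1)/2 S^dagger as a map on
  matrices, with S = diag(1, i) Clifford; moving the negative term to the other side bounds the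
  robustness of T by (sqrt 2 - 1)/2. Composing such decompositions, a circuit with at most k T gates
  is an affine combination of Clifford channels with weights of l1-norm at most sqrt 2^k, and so is
  its function f. An affine combination with weights w of total mass 1 has Rademacher complexity at
  most (sum |w|) times that of the combined class: positive weights are controlled by the supremum
  at the sign vector \<epsilon>, negative ones by the supremum at -\<epsilon>, and both average to the
  same value. Finally, f for a Clifford channel only depends on the n Paulis U Z_j U^dagger, so
  the Clifford class has at most 4^((n+1) n) sample vectors, and Massart's finite class lemma gives
  the bound sqrt 8 n / sqrt m max ||f||.
\<close>

section \<open>Matrix algebra\<close>

lemma mmult_assoc: "mmult N (mmult N A B) C = mmult N A (mmult N B C)"
proof -
  have "(\<Sum>k<N. (\<Sum>l<N. A i l * B l k) * C k j) = (\<Sum>l<N. A i l * (\<Sum>k<N. B l k * C k j))" for i j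
  proof -
    have "(\<Sum>k<N. (\<Sum>l<N. A i l * B l k) * C k j) = (\<Sum>k<N. \<Sum>l<N. A i l * B l k * C k j)"
      by (simp add: sum_distrib_right)
    also have "\<dots> = (\<Sum>l<N. \<Sum>k<N. A i l * B l k * C k j)" by (rule sum.swap)
    also have "\<dots> = (\<Sum>l<N. A i l * (\<Sum>k<N. B l k * C k j))"
      by (simp add: sum_distrib_left mult.assoc)
    finally show ?thesis .
  qed
  then show ?thesis unfolding mmult_def by (auto simp: fun_eq_iff)
qed

lemma adjoint_mmult: "Defs.adjoint (mmult N A B) = mmult N (Defs.adjoint B) (Defs.adjoint A)"
  unfolding Defs.adjoint_def mmult_def by (auto simp: fun_eq_iff mult.commute)

lemma mmult_cong:
  assumes "\<And>i j. i < N \<Longrightarrow> j < N \<Longrightarrow> A i j = A' i j"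
    and "\<And>i j. i < N \<Longrightarrow> j < N \<Longrightarrow> B i j = B' i j"
  shows "mmult N A B = mmult N A' B'"
  unfolding mmult_def using assms by (auto simp: fun_eq_iff intro!: sum.cong)

lemma mmult_trunc_left: "mmult N (\<lambda>i j. if i < N \<and> j < N then A i j else 0) B = mmult N A B"
  by (rule mmult_cong) auto

lemma mmult_trunc_right: "mmult N A (\<lambda>i j. if i < N \<and> j < N then B i j else 0) = mmult N A B"
  by (rule mmult_cong) auto

lemma mmult_sum_left:
  "mmult N (\<lambda>a b. \<Sum>i\<in>I. c i * B i a b) A = (\<lambda>x y. \<Sum>i\<in>I. c i * mmult N (B i) A x y)"
proof -
  have "(\<Sum>k<N. (\<Sum>i\<in>I. c i * B i x k) * A k y) = (\<Sum>i\<in>I. c i * (\<Sum>k<N. B i x k * A k y))" for x y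
  proof -
    have "(\<Sum>k<N. (\<Sum>i\<in>I. c i * B i x k) * A k y) = (\<Sum>k<N. \<Sum>i\<in>I. c i * (B i x k * A k y))"
      by (simp add: sum_distrib_right mult.assoc)
    also have "\<dots> = (\<Sum>i\<in>I. \<Sum>k<N. c i * (B i x k * A k y))" by (rule sum.swap)
    also have "\<dots> = (\<Sum>i\<in>I. c i * (\<Sum>k<N. B i x k * A k y))" by (simp add: sum_distrib_left)
    finally show ?thesis .
  qed
  then show ?thesis unfolding mmult_def by (auto simp: fun_eq_iff)
qed

lemma mmult_sum_right:
  "mmult N A (\<lambda>a b. \<Sum>i\<in>I. c i * B i a b) = (\<lambda>x y. \<Sum>i\<in>I. c i * mmult N A (B i) x y)"
proof -
  have "(\<Sum>k<N. A x k * (\<Sum>i\<in>I. c i * B i k y)) = (\<Sum>i\<in>I. c i * (\<Sum>k<N. A x k * B i k y))" for x y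
  proof -
    have "(\<Sum>k<N. A x k * (\<Sum>i\<in>I. c i * B i k y)) = (\<Sum>k<N. \<Sum>i\<in>I. c i * (A x k * B i k y))"
      by (simp add: sum_distrib_left mult_ac)
    also have "\<dots> = (\<Sum>i\<in>I. \<Sum>k<N. c i * (A x k * B i k y))" by (rule sum.swap)
    also have "\<dots> = (\<Sum>i\<in>I. c i * (\<Sum>k<N. A x k * B i k y))" by (simp add: sum_distrib_left)
    finally show ?thesis .
  qed
  then show ?thesis unfolding mmult_def by (auto simp: fun_eq_iff)
qed

lemma mmult_lincomb_left:
  "mmult N (\<lambda>i l. a * A i l + b * B i l) U = (\<lambda>i l. a * mmult N A U i l + b * mmult N B U i l)"
  unfolding mmult_def by (auto simp: fun_eq_iff sum.distrib sum_distrib_left algebra_simps)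

lemma mmult_lincomb_right:
  "mmult N U (\<lambda>i l. a * A i l + b * B i l) = (\<lambda>i l. a * mmult N U A i l + b * mmult N U B i l)"
  unfolding mmult_def by (auto simp: fun_eq_iff sum.distrib sum_distrib_left algebra_simps)

definition diag_mat :: "nat \<Rightarrow> (nat \<Rightarrow> complex) \<Rightarrow> cmat" where
  "diag_mat N d = (\<lambda>i j. if i < N \<and> j < N \<and> i = j then d i else 0)"

lemma idm_eq_diag_mat: "idm N = diag_mat N (\<lambda>_. 1)"
  unfolding idm_def diag_mat_def by simp

lemma adjoint_diag_mat: "Defs.adjoint (diag_mat N d) = diag_mat N (\<lambda>i. cnj (d i))"
  unfolding Defs.adjoint_def diag_mat_def by (auto simp: fun_eq_iff)

lemma mmult_diag_mat_left:
  "mmult N (diag_mat N d) A = (\<lambda>i j. if i < N \<and> j < N then d i * A i j else 0)"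
proof -
  have "(\<Sum>k<N. (if i < N \<and> k < N \<and> i = k then d i else 0) * A k j) = d i * A i j" if "i < N" for i j
  proof -
    have "(\<Sum>k<N. (if i < N \<and> k < N \<and> i = k then d i else 0) * A k j)
        = (\<Sum>k<N. if i = k then d i * A k j else 0)"
      by (rule sum.cong) auto
    then show ?thesis using that by simp
  qed
  then show ?thesis unfolding mmult_def diag_mat_def by (auto simp: fun_eq_iff)
qed

lemma mmult_diag_mat_right:
  "mmult N A (diag_mat N d) = (\<lambda>i j. if i < N \<and> j < N then A i j * d j else 0)"
proof -
  have "(\<Sum>k<N. A i k * (if k < N \<and> j < N \<and> k = j then d k else 0)) = A i j * d j" if "j < N" for i j
  proof -
    have "(\<Sum>k<N. A i k * (if k < N \<and> j < N \<and> k = j then d k else 0))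
        = (\<Sum>k<N. if k = j then A i k * d k else 0)"
      by (rule sum.cong) auto
    then show ?thesis using that by simp
  qed
  then show ?thesis unfolding mmult_def diag_mat_def by (auto simp: fun_eq_iff)
qed

lemma mmult_diag_mat_diag_mat: "mmult N (diag_mat N d) (diag_mat N e) = diag_mat N (\<lambda>i. d i * e i)"
  unfolding mmult_diag_mat_left by (auto simp: fun_eq_iff diag_mat_def)

lemma mmult_idm_left: "mmult N (idm N) A = (\<lambda>i j. if i < N \<and> j < N then A i j else 0)"
  unfolding idm_eq_diag_mat mmult_diag_mat_left by (auto simp: fun_eq_iff)

lemma mmult_idm_right: "mmult N A (idm N) = (\<lambda>i j. if i < N \<and> j < N then A i j else 0)"
  unfolding idm_eq_diag_mat mmult_diag_mat_right by (auto simp: fun_eq_iff)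

lemma mmult_idm_absorb_left: "mmult N (mmult N X (idm N)) A = mmult N X A"
  unfolding mmult_idm_right mmult_trunc_left ..

lemma mmult_idm_absorb_right: "mmult N A (mmult N (idm N) X) = mmult N A X"
  unfolding mmult_idm_left mmult_trunc_right ..

lemma unitary_diag_mat:
  assumes "\<And>i. i < N \<Longrightarrow> d i * cnj (d i) = 1"
  shows "unitary_mat N (diag_mat N d)"
  unfolding unitary_mat_def adjoint_diag_mat mmult_diag_mat_diag_mat idm_eq_diag_mat
  using assms by (auto simp: fun_eq_iff diag_mat_def mult.commute)

lemma unitary_cancel_left:
  "unitary_mat N V \<Longrightarrow> mmult N V (mmult N (Defs.adjoint V) X) = mmult N (idm N) X"
  unfolding unitary_mat_def by (simp flip: mmult_assoc)

lemma unitary_cancel_right: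
  "unitary_mat N V \<Longrightarrow> mmult N (Defs.adjoint V) (mmult N V X) = mmult N (idm N) X"
  unfolding unitary_mat_def by (simp flip: mmult_assoc)

lemma unitary_mult:
  assumes "unitary_mat N U" "unitary_mat N V"
  shows "unitary_mat N (mmult N U V)"
proof -
  have "mmult N (mmult N U V) (Defs.adjoint (mmult N U V)) = idm N"
    using assms unfolding adjoint_mmult
    by (simp add: mmult_assoc unitary_cancel_left mmult_idm_absorb_right) (simp add: unitary_mat_def)
  moreover have "mmult N (Defs.adjoint (mmult N U V)) (mmult N U V) = idm N"
    using assms unfolding adjoint_mmult
    by (simp add: mmult_assoc unitary_cancel_right mmult_idm_absorb_right) (simp add: unitary_mat_def)
  ultimately show ?thesis unfolding unitary_mat_def by simp
qed

lemma unitary_channel_comp: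
  "unitary_channel N U (unitary_channel N V \<rho>) = unitary_channel N (mmult N U V) \<rho>"
  unfolding unitary_channel_def adjoint_mmult by (simp add: mmult_assoc)

lemma unitary_channel_cong:
  assumes "\<And>i j. i < N \<Longrightarrow> j < N \<Longrightarrow> A i j = B i j"
  shows "unitary_channel N U A = unitary_channel N U B"
  unfolding unitary_channel_def using assms by (metis mmult_cong)

lemma unitary_channel_sum:
  "unitary_channel N U (\<lambda>a b. \<Sum>i\<in>I. c i * B i a b)
     = (\<lambda>x y. \<Sum>i\<in>I. c i * unitary_channel N U (B i) x y)"
  unfolding unitary_channel_def mmult_sum_right mmult_sum_left ..

lemma unitary_channel_lincomb:
  "unitary_channel N U (\<lambda>i l. a * A i l + b * B i l)
     = (\<lambda>i l. a * unitary_channel N U A i l + b * unitary_channel N U B i l)"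
  unfolding unitary_channel_def mmult_lincomb_right mmult_lincomb_left ..

lemma unitary_channel_mmult:
  "unitary_mat N U \<Longrightarrow>
    unitary_channel N U (mmult N A B) = mmult N (unitary_channel N U A) (unitary_channel N U B)"
  unfolding unitary_channel_def by (simp add: mmult_assoc unitary_cancel_right mmult_idm_absorb_right)

lemma unitary_channel_idm: "unitary_mat N U \<Longrightarrow> unitary_channel N U (idm N) = idm N"
  unfolding unitary_channel_def mmult_idm_absorb_left unitary_mat_def by simp

lemma unitary_channel_diag_mat:
  "unitary_channel N (diag_mat N d) \<rho> = (\<lambda>x y. if x < N \<and> y < N then d x * \<rho> x y * cnj (d y) else 0)"
  unfolding unitary_channel_def adjoint_diag_mat mmult_diag_mat_left mmult_diag_mat_right
  by (auto simp: fun_eq_iff)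

lemma unitary_channel_idm_apply:
  "x < N \<Longrightarrow> y < N \<Longrightarrow> unitary_channel N (idm N) \<rho> x y = \<rho> x y"
  unfolding idm_eq_diag_mat unitary_channel_diag_mat by simp

section \<open>Clifford channels and phase gates\<close>

lemma clifford_iff:
  "U \<in> clifford n \<longleftrightarrow> unitary_mat (2^n) U \<and>
     (\<forall>P\<in>pauli_group n. unitary_channel (2^n) U P \<in> pauli_group n)"
  unfolding clifford_def unitary_channel_def by simp

lemma clifford_mult:
  assumes "U \<in> clifford n" "V \<in> clifford n"
  shows "mmult (2^n) U V \<in> clifford n"
  using assms unfolding clifford_iff
  by (auto intro: unitary_mult simp flip: unitary_channel_comp)

lemma idm_in_clifford: "idm (2^n) \<in> clifford n"
proof -
  have "unitary_mat (2^n) (idm (2^n))"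
    unfolding idm_eq_diag_mat by (rule unitary_diag_mat) simp
  moreover have "unitary_channel (2^n) (idm (2^n)) P = P" if "P \<in> pauli_group n" for P
    using that unfolding pauli_group_def idm_eq_diag_mat unitary_channel_diag_mat
    by (auto simp: fun_eq_iff pauli_def)
  ultimately show ?thesis unfolding clifford_iff by simp
qed

lemma STAB_comp:
  assumes "\<Phi> \<in> STAB n" "\<Psi> \<in> STAB n"
  shows "\<Phi> \<circ> \<Psi> \<in> STAB n"
proof -
  obtain U V where U: "U \<in> clifford n" "\<Phi> = unitary_channel (2^n) U"
    and V: "V \<in> clifford n" "\<Psi> = unitary_channel (2^n) V"
    using assms unfolding STAB_def by auto
  have "\<Phi> \<circ> \<Psi> = unitary_channel (2^n) (mmult (2^n) U V)"
    unfolding U V by (auto simp: fun_eq_iff unitary_channel_comp)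
  then show ?thesis unfolding STAB_def using clifford_mult[OF U(1) V(1)] by auto
qed

lemma STAB_linear:
  assumes "\<Phi> \<in> STAB n"
    and "\<And>a b. a < 2^n \<Longrightarrow> b < 2^n \<Longrightarrow> A a b = (\<Sum>i\<in>I. c i * B i a b)"
  shows "\<Phi> A = (\<lambda>x y. \<Sum>i\<in>I. c i * \<Phi> (B i) x y)"
proof -
  obtain U where U: "\<Phi> = unitary_channel (2^n) U" using assms unfolding STAB_def by auto
  have "\<Phi> A = \<Phi> (\<lambda>a b. \<Sum>i\<in>I. c i * B i a b)"
    unfolding U by (rule unitary_channel_cong) (use assms in auto)
  then show ?thesis unfolding U unitary_channel_sum .
qed

definition phase_gate :: "nat \<Rightarrow> nat \<Rightarrow> cmat" where
  "phase_gate n e = diag_mat (2^n) (\<lambda>i. if bit i 0 then \<i> ^ e else 1)"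

lemma phase_gate_0: "phase_gate n 0 = idm (2^n)"
  unfolding phase_gate_def idm_eq_diag_mat by (simp cong: if_cong)

lemma cnj_i_power_odd:
  assumes "odd e"
  shows "cnj (\<i> ^ e) = - (\<i> ^ e)"
  using power_minus_odd[OF assms, of \<i>] by simp

lemma pauli_in_pauli_group: "c < 4 \<Longrightarrow> a < 2^n \<Longrightarrow> b < 2^n \<Longrightarrow> pauli n c a b \<in> pauli_group n"
  unfolding pauli_group_def by blast

lemma i_power_mod4: "\<i> ^ (k mod 4) = \<i> ^ k"
proof -
  have "\<i> ^ 4 = (\<i> ^ 2) ^ 2" by (simp flip: power_mult)
  then have "\<i> ^ 4 = 1" by simp
  moreover have "\<i> ^ k = (\<i> ^ 4) ^ (k div 4) * \<i> ^ (k mod 4)"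
    by (metis div_mult_mod_eq mult.commute power_add power_mult)
  ultimately show ?thesis by simp
qed

lemma xor_less_two_power: "a < 2^n \<Longrightarrow> b < 2^n \<Longrightarrow> Bit_Operations.xor a b < (2::nat)^n"
  by (metis take_bit_nat_eq_self_iff take_bit_xor)

lemma pauli_sign_xor_one:
  assumes "0 < n"
  shows "((-1::complex) ^ card {j. j < n \<and> bit (Bit_Operations.xor b (1::nat)) j \<and> bit y j})
       = (-1) ^ card {j. j < n \<and> bit b j \<and> bit y j} * (if bit y 0 then -1 else 1)"
proof -
  define A where "A = {j. 0 < j \<and> j < n \<and> bit b j \<and> bit y j}"
  have fA: "finite A" "0 \<notin> A" unfolding A_def by auto
  have S: "{j. j < n \<and> bit b j \<and> bit y j} = A \<union> (if bit b 0 \<and> bit y 0 then {0} else {})"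
    using assms unfolding A_def by (auto simp: neq0_conv) (metis gr0I)+
  have S': "{j. j < n \<and> bit (Bit_Operations.xor b (1::nat)) j \<and> bit y j}
      = A \<union> (if \<not> bit b 0 \<and> bit y 0 then {0} else {})"
    using assms unfolding A_def by (auto simp: bit_simps neq0_conv split: if_splits)
  show ?thesis unfolding S S' using fA by (cases "bit b 0"; cases "bit y 0") auto
qed

lemma phase_gate_conj_pauli:
  assumes n: "0 < n" and e: "odd e"
  shows "unitary_channel (2^n) (phase_gate n e) (pauli n c a b)
       = pauli n (if bit a 0 then (c + e) mod 4 else c) a (if bit a 0 then Bit_Operations.xor b 1 else b)"
    (is "?lhs = pauli n ?c a ?b")
proof (intro ext)
  fix x y
  have ie: "\<i> ^ e * cnj (\<i> ^ e) = 1"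
    by (simp add: complex_cnj_power flip: power_mult_distrib)
  show "?lhs x y = pauli n ?c a ?b x y"
  proof (cases "x < 2^n \<and> y < 2^n \<and> x = Bit_Operations.xor y a")
    case False
    then show ?thesis unfolding phase_gate_def unitary_channel_diag_mat by (auto simp: pauli_def)
  next
    case True
    have bx: "bit x 0 = (bit y 0 \<noteq> bit a 0)" using True by (simp add: bit_simps)
    have l: "?lhs x y = (if bit x 0 then \<i> ^ e else 1) * (\<i> ^ c * (-1) ^ card {j. j < n \<and> bit b j \<and> bit y j})
        * cnj (if bit y 0 then \<i> ^ e else 1)"
      unfolding phase_gate_def unitary_channel_diag_mat using True by (simp add: pauli_def)
    show ?thesis
    proof (cases "bit a 0")
      case False
      then show ?thesis unfolding l using True bx ie by (auto simp: pauli_def mult_ac)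
    next
      case a0: True
      have r: "pauli n ?c a ?b x y
          = \<i> ^ c * \<i> ^ e * ((-1) ^ card {j. j < n \<and> bit b j \<and> bit y j} * (if bit y 0 then -1 else 1))"
        using True a0 pauli_sign_xor_one[OF n, of b y] unfolding pauli_def
        by (cases "bit y 0") (simp_all add: i_power_mod4 power_add)
      show ?thesis unfolding l r using a0 bx cnj_i_power_odd[OF e]
        by (cases "bit y 0") (auto simp: mult_ac)
    qed
  qed
qed

lemma phase_gate_in_clifford:
  assumes n: "0 < n" and e: "odd e"
  shows "phase_gate n e \<in> clifford n"
proof -
  have "unitary_mat (2^n) (phase_gate n e)"
    unfolding phase_gate_def
    by (rule unitary_diag_mat) (simp add: complex_cnj_power flip: power_mult_distrib)
  moreover have "unitary_channel (2^n) (phase_gate n e) P \<in> pauli_group n"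
    if P: "P \<in> pauli_group n" for P
  proof -
    obtain c a b where P: "P = pauli n c a b" "c < 4" "a < 2^n" "b < 2^n"
      using P unfolding pauli_group_def by blast
    have "Bit_Operations.xor b 1 < 2^n"
      using P(4) n one_less_power[of "2::nat" n] by (intro xor_less_two_power) auto
    then show ?thesis
      unfolding P(1) phase_gate_conj_pauli[OF n e] using P by (auto intro: pauli_in_pauli_group)
  qed
  ultimately show ?thesis unfolding clifford_iff by blast
qed

definition phase_chan :: "nat \<Rightarrow> nat \<Rightarrow> chan" where
  "phase_chan n e = unitary_channel (2^n) (phase_gate n e)"

lemma phase_chan_in_STAB: "e = 0 \<or> 0 < n \<and> odd e \<Longrightarrow> phase_chan n e \<in> STAB n"
  unfolding phase_chan_def STAB_def using idm_in_clifford phase_gate_in_clifford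
  by (auto simp: phase_gate_0)

lemma phase_chan_0_apply: "x < 2^n \<Longrightarrow> y < 2^n \<Longrightarrow> phase_chan n 0 \<rho> x y = \<rho> x y"
  unfolding phase_chan_def phase_gate_0 by (rule unitary_channel_idm_apply)

section \<open>The T gate and its free robustness\<close>

text \<open>Conjugation by diag(1, d) on the first qubit scales the entries of \<rho> by 1, d, cnj d or
  |d|^2, so it suffices to write \<omega> = e^(i pi/4) as sqrt 2/2 + i/2 - (sqrt 2 - 1)/2 * (-i)
  with weights summing to 1.\<close>
lemma Phi_T_decomp:
  "Phi_T n \<rho> x y = of_real (sqrt 2 / 2) * phase_chan n 0 \<rho> x y
     + of_real (1/2) * phase_chan n 1 \<rho> x y - of_real ((sqrt 2 - 1) / 2) * phase_chan n 3 \<rho> x y"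
proof -
  have T: "T_gate n = diag_mat (2^n) (\<lambda>i. if bit i 0 then exp (\<i> * complex_of_real (pi / 4)) else 1)"
    unfolding T_gate_def diag_mat_def by simp
  have \<omega>: "exp (\<i> * complex_of_real (pi / 4)) = Complex (sqrt 2 / 2) (sqrt 2 / 2)"
    by (simp add: complex_eq_iff Re_exp Im_exp cos_45 sin_45)
  have i3: "\<i> ^ 3 = - \<i>" by (simp add: power3_eq_cube)
  show ?thesis
    unfolding Phi_T_def phase_chan_def T phase_gate_def unitary_channel_diag_mat \<omega> i3
    by (cases "bit x 0"; cases "bit y 0") (auto simp: complex_eq_iff field_simps)
qed

lemma conv_chans_finite_comb:
  assumes "finite I" "\<forall>i\<in>I. 0 \<le> c i \<and> \<Psi> i \<in> Os" "sum c I = 1"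
  shows "(\<lambda>\<rho> x y. \<Sum>i\<in>I. of_real (c i) * \<Psi> i \<rho> x y) \<in> conv_chans Os"
proof -
  obtain f where f: "bij_betw f {..<card I} I"
    using assms(1) by (metis atLeast0LessThan ex_bij_betw_nat_finite)
  have "(\<Sum>k<card I. c (f k)) = 1"
    using sum.reindex_bij_betw[OF f, of c] assms(3) by simp
  moreover have "(\<Sum>i\<in>I. of_real (c i) * \<Psi> i \<rho> x y)
      = (\<Sum>k<card I. of_real (c (f k)) * \<Psi> (f k) \<rho> x y)" for \<rho> x y
    using sum.reindex_bij_betw[OF f, of "\<lambda>i. of_real (c i) * \<Psi> i \<rho> x y"] by simp
  ultimately show ?thesis unfolding conv_chans_def using assms(2) bij_betwE[OF f]
    by (intro CollectI exI[of _ "card I"] exI[of _ "c \<circ> f"] exI[of _ "\<Psi> \<circ> f"]) auto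
qed

lemma free_robustness_le:
  assumes "0 \<le> lam" "\<Phi> \<in> conv_chans Os"
    and "(\<lambda>\<rho> x y. (\<Psi> \<rho> x y + of_real lam * \<Phi> \<rho> x y) / of_real (1 + lam)) \<in> conv_chans Os"
  shows "free_robustness Os \<Psi> \<le> lam"
  unfolding free_robustness_def using assms by (intro cInf_lower) (auto intro: bdd_belowI[of _ 0])

lemma free_robustness_Phi_T:
  assumes n: "0 < n"
  shows "free_robustness (STAB n) (Phi_T n) \<le> (sqrt 2 - 1) / 2"
proof (rule free_robustness_le)
  define lam :: real where "lam = (sqrt 2 - 1) / 2"
  have "1 \<le> sqrt (2::real)" by simp
  then have lam: "0 \<le> lam" "1 + lam = (1 + sqrt 2) / 2" unfolding lam_def by (simp_all add: field_simps)
  show "0 \<le> (sqrt 2 - 1) / (2::real)" using lam(1) unfolding lam_def .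
  show "phase_chan n 3 \<in> conv_chans (STAB n)"
    using conv_chans_finite_comb[of "{0::nat}" "\<lambda>_. 1" "\<lambda>_. phase_chan n 3"] phase_chan_in_STAB[of 3 n] n
    by simp
  define c where "c = (\<lambda>i::nat. if i = 0 then (sqrt 2 / 2) / (1 + lam) else (1/2) / (1 + lam))"
  have "(\<lambda>\<rho> x y. (Phi_T n \<rho> x y + of_real lam * phase_chan n 3 \<rho> x y) / of_real (1 + lam))
      = (\<lambda>\<rho> x y. \<Sum>i\<in>{0,1}. of_real (c i) * phase_chan n i \<rho> x y)"
  proof (intro ext)
    fix \<rho> x y
    have "Phi_T n \<rho> x y + of_real lam * phase_chan n 3 \<rho> x y
        = of_real (sqrt 2 / 2) * phase_chan n 0 \<rho> x y + of_real (1/2) * phase_chan n 1 \<rho> x y"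
      unfolding Phi_T_decomp lam_def by (simp add: field_simps)
    then show "(Phi_T n \<rho> x y + of_real lam * phase_chan n 3 \<rho> x y) / of_real (1 + lam)
        = (\<Sum>i\<in>{0,1}. of_real (c i) * phase_chan n i \<rho> x y)"
      by (simp add: c_def add_divide_distrib of_real_divide)
  qed
  moreover have "(\<lambda>\<rho> x y. \<Sum>i\<in>{0,1}. of_real (c i) * phase_chan n i \<rho> x y) \<in> conv_chans (STAB n)"
  proof (rule conv_chans_finite_comb)
    show "\<forall>i\<in>{0, 1}. 0 \<le> c i \<and> phase_chan n i \<in> STAB n"
      unfolding c_def using lam(1) n phase_chan_in_STAB by auto
    have "0 < 1 + sqrt (2::real)" by (simp add: add_pos_nonneg)
    then show "sum c {0, 1} = 1" unfolding c_def lam(2) by (simp add: field_simps)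
  qed simp
  ultimately show "(\<lambda>\<rho> x y. (Phi_T n \<rho> x y + of_real ((sqrt 2 - 1) / 2) * phase_chan n 3 \<rho> x y)
      / of_real (1 + (sqrt 2 - 1) / 2)) \<in> conv_chans (STAB n)"
    unfolding lam_def by simp
qed


section \<open>Quasi-probability decompositions into Clifford channels\<close>

text \<open>A channel of free robustness \<gamma> has such a decomposition with M = 1 + 2\<gamma>.\<close>
definition quasi_stab_decomp :: "nat \<Rightarrow> real \<Rightarrow> chan \<Rightarrow> bool" where
  "quasi_stab_decomp n M \<Psi> \<longleftrightarrow> (\<exists>(I::nat set) w C. finite I \<and> C ` I \<subseteq> STAB n \<and> sum w I = 1
     \<and> (\<Sum>i\<in>I. \<bar>w i\<bar>) \<le> M
     \<and> (\<forall>\<rho> x y. x < 2^n \<longrightarrow> y < 2^n \<longrightarrow> \<Psi> \<rho> x y = (\<Sum>i\<in>I. of_real (w i) * C i \<rho> x y)))"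

lemma quasi_stab_decompI:
  fixes I :: "nat set"
  assumes "finite I" "C ` I \<subseteq> STAB n" "sum w I = 1" "(\<Sum>i\<in>I. \<bar>w i\<bar>) \<le> M"
    and "\<And>\<rho> x y. x < 2^n \<Longrightarrow> y < 2^n \<Longrightarrow> \<Psi> \<rho> x y = (\<Sum>i\<in>I. of_real (w i) * C i \<rho> x y)"
  shows "quasi_stab_decomp n M \<Psi>"
  unfolding quasi_stab_decomp_def using assms
  by (intro exI[where x=I] exI[where x=w] exI[where x=C] conjI allI impI) simp_all

lemma quasi_stab_decompE:
  assumes "quasi_stab_decomp n M \<Psi>"
  obtains I :: "nat set" and C w where "finite I" "C ` I \<subseteq> STAB n" "sum w I = 1"
    "(\<Sum>i\<in>I. \<bar>w i\<bar>) \<le> M"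
    "\<And>\<rho> x y. x < 2^n \<Longrightarrow> y < 2^n \<Longrightarrow> \<Psi> \<rho> x y = (\<Sum>i\<in>I. of_real (w i) * C i \<rho> x y)"
  using assms unfolding quasi_stab_decomp_def by (elim exE conjE) (rule that; simp)

lemma quasi_stab_decomp_mono:
  "quasi_stab_decomp n M \<Psi> \<Longrightarrow> M \<le> M' \<Longrightarrow> quasi_stab_decomp n M' \<Psi>"
  unfolding quasi_stab_decomp_def by (meson order_trans)

lemma quasi_stab_decomp_STAB: "\<Phi> \<in> STAB n \<Longrightarrow> quasi_stab_decomp n 1 \<Phi>"
  by (rule quasi_stab_decompI[of "{0}" "\<lambda>_. \<Phi>" n "\<lambda>_. 1"]) auto

lemma quasi_stab_decomp_id: "quasi_stab_decomp n 1 id"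
  by (rule quasi_stab_decompI[of "{0}" "\<lambda>_. phase_chan n 0" n "\<lambda>_. 1"])
     (auto simp: phase_chan_in_STAB phase_chan_0_apply)

lemma quasi_stab_decomp_Phi_T:
  assumes "0 < n"
  shows "quasi_stab_decomp n (sqrt 2) (Phi_T n)"
proof (rule quasi_stab_decompI)
  define w :: "nat \<Rightarrow> real" where "w = (!) [sqrt 2 / 2, 1/2, - (sqrt 2 - 1) / 2]"
  define C where "C = (\<lambda>j. phase_chan n ([0, 1, 3] ! j))"
  have "1 \<le> sqrt (2::real)" by simp
  then show "(\<Sum>j\<in>{0,1,2}. \<bar>w j\<bar>) \<le> sqrt 2" unfolding w_def by (simp add: field_simps)
  show "sum w {0,1,2} = 1" unfolding w_def by (simp add: field_simps)
  show "C ` {0,1,2} \<subseteq> STAB n" unfolding C_def using assms by (auto intro: phase_chan_in_STAB)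
  show "Phi_T n \<rho> x y = (\<Sum>j\<in>{0,1,2}. of_real (w j) * C j \<rho> x y)" for \<rho> x y
    unfolding Phi_T_decomp w_def C_def by (simp add: field_simps)
qed simp

lemma quasi_stab_decomp_comp:
  assumes "quasi_stab_decomp n M \<Phi>" "quasi_stab_decomp n M' \<Psi>"
  shows "quasi_stab_decomp n (M * M') (\<Phi> \<circ> \<Psi>)"
proof -
  obtain J :: "nat set" and D v where J: "finite J" "D ` J \<subseteq> STAB n" "sum v J = 1" "(\<Sum>j\<in>J. \<bar>v j\<bar>) \<le> M"
    and \<Phi>: "\<And>\<rho> x y. x < 2^n \<Longrightarrow> y < 2^n \<Longrightarrow> \<Phi> \<rho> x y = (\<Sum>j\<in>J. of_real (v j) * D j \<rho> x y)"
    by (erule quasi_stab_decompE[OF assms(1)])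
  obtain I :: "nat set" and C w where I: "finite I" "C ` I \<subseteq> STAB n" "sum w I = 1" "(\<Sum>i\<in>I. \<bar>w i\<bar>) \<le> M'"
    and \<Psi>: "\<And>\<rho> x y. x < 2^n \<Longrightarrow> y < 2^n \<Longrightarrow> \<Psi> \<rho> x y = (\<Sum>i\<in>I. of_real (w i) * C i \<rho> x y)"
    by (erule quasi_stab_decompE[OF assms(2)])
  define u where "u k = v (fst (prod_decode k)) * w (snd (prod_decode k))" for k
  define E where "E k = D (fst (prod_decode k)) \<circ> C (snd (prod_decode k))" for k
  have reindex: "(\<Sum>k\<in>prod_encode ` (J \<times> I). h k) = (\<Sum>j\<in>J. \<Sum>i\<in>I. h (prod_encode (j, i)))"
    for h :: "nat \<Rightarrow> 'b::comm_monoid_add"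
    by (simp add: sum.reindex inj_prod_encode sum.cartesian_product)
  show ?thesis
  proof (rule quasi_stab_decompI)
    show "finite (prod_encode ` (J \<times> I))" using I(1) J(1) by simp
    show "E ` prod_encode ` (J \<times> I) \<subseteq> STAB n"
      unfolding E_def using I(2) J(2) by (auto intro!: STAB_comp simp: image_subset_iff)
    show "sum u (prod_encode ` (J \<times> I)) = 1"
      unfolding reindex u_def by (simp add: sum_product[symmetric] I(3) J(3))
    have "(\<Sum>k\<in>prod_encode ` (J \<times> I). \<bar>u k\<bar>) = (\<Sum>j\<in>J. \<bar>v j\<bar>) * (\<Sum>i\<in>I. \<bar>w i\<bar>)"
      unfolding reindex u_def by (simp add: sum_product abs_mult)
    also have "\<dots> \<le> M * M'"
      using I(4) J(4) by (intro mult_mono) (auto intro: sum_nonneg order_trans)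
    finally show "(\<Sum>k\<in>prod_encode ` (J \<times> I). \<bar>u k\<bar>) \<le> M * M'" .
    fix \<rho> and x y :: nat assume xy: "x < 2^n" "y < 2^n"
    have "D j (\<Psi> \<rho>) = (\<lambda>x y. \<Sum>i\<in>I. of_real (w i) * (D j \<circ> C i) \<rho> x y)" if "j \<in> J" for j
      using STAB_linear[where \<Phi>="D j" and A="\<Psi> \<rho>" and I=I and c="\<lambda>i. of_real (w i)" and B="\<lambda>i. C i \<rho>"]
        J(2) that \<Psi> by auto
    then have "(\<Phi> \<circ> \<Psi>) \<rho> x y = (\<Sum>j\<in>J. of_real (v j) * (\<Sum>i\<in>I. of_real (w i) * (D j \<circ> C i) \<rho> x y))"
      using \<Phi>[OF xy] by simp
    also have "\<dots> = (\<Sum>k\<in>prod_encode ` (J \<times> I). of_real (u k) * E k \<rho> x y)"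
      unfolding reindex u_def E_def by (simp add: sum_distrib_left mult_ac)
    finally show "(\<Phi> \<circ> \<Psi>) \<rho> x y = (\<Sum>k\<in>prod_encode ` (J \<times> I). of_real (u k) * E k \<rho> x y)" .
  qed
qed

lemma quasi_stab_decomp_comp_chans:
  assumes "0 < n" "set ls \<subseteq> STAB n \<union> {Phi_T n}"
  shows "quasi_stab_decomp n (sqrt 2 ^ length (filter (\<lambda>\<Phi>. \<Phi> = Phi_T n) ls)) (comp_chans ls)"
  using assms(2)
proof (induction ls)
  case Nil
  show ?case using quasi_stab_decomp_id[of n] by (simp add: comp_chans_def id_def)
next
  case (Cons \<Phi> ls)
  have "quasi_stab_decomp n (if \<Phi> = Phi_T n then sqrt 2 else 1) \<Phi>"
    using Cons.prems quasi_stab_decomp_Phi_T[OF assms(1)] quasi_stab_decomp_STAB by auto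
  from quasi_stab_decomp_comp[OF this Cons.IH] Cons.prems show ?case
    by (simp add: comp_chans_def o_def split: if_splits)
qed

lemma quasi_stab_decomp_STAB_T:
  assumes "0 < n" "\<Phi> \<in> STAB_T n k"
  shows "quasi_stab_decomp n (sqrt 2 ^ k) \<Phi>"
proof -
  obtain ls where ls: "set ls \<subseteq> STAB n \<union> {Phi_T n}" "length (filter (\<lambda>\<Phi>. \<Phi> = Phi_T n) ls) \<le> k"
    and \<Phi>: "\<Phi> = comp_chans ls"
    using assms(2) unfolding STAB_T_def by blast
  have "sqrt 2 ^ length (filter (\<lambda>\<Phi>. \<Phi> = Phi_T n) ls) \<le> sqrt 2 ^ k"
    using ls(2) by (rule power_increasing) simp
  with quasi_stab_decomp_comp_chans[OF assms(1) ls(1)] show ?thesis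
    unfolding \<Phi> by (rule quasi_stab_decomp_mono)
qed

definition quasi_hull :: "real \<Rightarrow> ('a \<Rightarrow> real) set \<Rightarrow> ('a \<Rightarrow> real) set" where
  "quasi_hull M G = {g. \<exists>(I::nat set) w h. finite I \<and> h ` I \<subseteq> G \<and> sum w I = 1
     \<and> (\<Sum>i\<in>I. \<bar>w i\<bar>) \<le> M \<and> g = (\<lambda>x. \<Sum>i\<in>I. w i * h i x)}"

lemma quasi_hullI:
  fixes I :: "nat set"
  assumes "finite I" "h ` I \<subseteq> G" "sum w I = 1" "(\<Sum>i\<in>I. \<bar>w i\<bar>) \<le> M"
  shows "(\<lambda>x. \<Sum>i\<in>I. w i * h i x) \<in> quasi_hull M G"
  unfolding quasi_hull_def mem_Collect_eq using assms
  by (intro exI[where x=I] exI[where x=w] exI[where x=h]) simp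

lemma quasi_hullE:
  assumes "g \<in> quasi_hull M G"
  obtains I :: "nat set" and w h where "finite I" "h ` I \<subseteq> G" "sum w I = 1"
    "(\<Sum>i\<in>I. \<bar>w i\<bar>) \<le> M" "g = (\<lambda>x. \<Sum>i\<in>I. w i * h i x)"
  using assms unfolding quasi_hull_def mem_Collect_eq by (elim exE conjE) (rule that)

lemma f_chan_sum:
  assumes "\<And>a b. a < 2^n \<Longrightarrow> b < 2^n \<Longrightarrow> \<Psi> (ket_bra x) a b = (\<Sum>i\<in>I. of_real (w i) * C i (ket_bra x) a b)"
  shows "f_chan n \<Psi> (x, y) = (\<Sum>i\<in>I. w i * f_chan n (C i) (x, y))"
proof -
  let ?N = "2^n :: nat"
  have "mmult ?N (\<Psi> (ket_bra x)) (ket_bra y)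
      = mmult ?N (\<lambda>a b. \<Sum>i\<in>I. of_real (w i) * C i (ket_bra x) a b) (ket_bra y)"
    by (rule mmult_cong) (use assms in auto)
  then have "mtrace ?N (mmult ?N (\<Psi> (ket_bra x)) (ket_bra y))
      = (\<Sum>a<?N. \<Sum>i\<in>I. of_real (w i) * mmult ?N (C i (ket_bra x)) (ket_bra y) a a)"
    unfolding mmult_sum_left mtrace_def by simp
  also have "\<dots> = (\<Sum>i\<in>I. of_real (w i) * mtrace ?N (mmult ?N (C i (ket_bra x)) (ket_bra y)))"
    unfolding mtrace_def by (subst sum.swap) (simp add: sum_distrib_left)
  finally show ?thesis unfolding f_chan_def by (simp add: Re_sum)
qed

lemma f_chan_in_quasi_hull:
  assumes "quasi_stab_decomp n M \<Psi>"
  shows "f_chan n \<Psi> \<in> quasi_hull M (F_class n (STAB n))"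
proof -
  obtain I :: "nat set" and C w where I: "finite I" "C ` I \<subseteq> STAB n" "sum w I = 1" "(\<Sum>i\<in>I. \<bar>w i\<bar>) \<le> M"
    and \<Psi>: "\<And>\<rho> x y. x < 2^n \<Longrightarrow> y < 2^n \<Longrightarrow> \<Psi> \<rho> x y = (\<Sum>i\<in>I. of_real (w i) * C i \<rho> x y)"
    by (erule quasi_stab_decompE[OF assms])
  have "f_chan n \<Psi> (x, y) = (\<Sum>i\<in>I. w i * f_chan n (C i) (x, y))" for x y
    by (rule f_chan_sum) (rule \<Psi>)
  then have "f_chan n \<Psi> = (\<lambda>xy. \<Sum>i\<in>I. w i * f_chan n (C i) xy)"
    by (simp add: fun_eq_iff)
  moreover have "(\<lambda>i. f_chan n (C i)) ` I \<subseteq> F_class n (STAB n)"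
    using I(2) unfolding F_class_def by auto
  ultimately show ?thesis using I(1,3,4) by (simp add: quasi_hullI)
qed

lemma F_class_subset_quasi_hull:
  assumes "\<And>\<Phi>. \<Phi> \<in> \<Omega> \<Longrightarrow> quasi_stab_decomp n M \<Phi>"
  shows "F_class n \<Omega> \<subseteq> quasi_hull M (F_class n (STAB n))"
  using assms f_chan_in_quasi_hull unfolding F_class_def[of n \<Omega>] by blast


section \<open>Rademacher complexity of quasi-hulls\<close>

definition sign_vectors :: "nat \<Rightarrow> (nat \<Rightarrow> real) set" where
  "sign_vectors m = PiE {..<m} (\<lambda>_. {-1, 1})"

definition sample_corr :: "nat \<Rightarrow> (nat \<Rightarrow> nat \<times> nat) \<Rightarrow> (nat \<Rightarrow> real) \<Rightarrow> (nat \<times> nat \<Rightarrow> real) \<Rightarrow> real"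
  where "sample_corr m z \<epsilon> g = (\<Sum>i<m. \<epsilon> i * g (z i)) / real m"

definition sup_corr :: "nat \<Rightarrow> (nat \<Rightarrow> nat \<times> nat) \<Rightarrow> (nat \<times> nat \<Rightarrow> real) set \<Rightarrow> (nat \<Rightarrow> real) \<Rightarrow> real"
  where "sup_corr m z G \<epsilon> = (SUP g\<in>G. sample_corr m z \<epsilon> g)"

lemma rademacher_eq: "rademacher m z G = (\<Sum>\<epsilon>\<in>sign_vectors m. sup_corr m z G \<epsilon>) / 2 ^ m"
  unfolding rademacher_def sign_vectors_def sup_corr_def sample_corr_def ..

lemma finite_sign_vectors: "finite (sign_vectors m)"
  unfolding sign_vectors_def by (intro finite_PiE) auto

lemma card_sign_vectors: "card (sign_vectors m) = 2 ^ m"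
  unfolding sign_vectors_def by (simp add: card_PiE numeral_2_eq_2)

lemma sum_sign_vectors_uminus:
  assumes "\<And>\<epsilon> \<epsilon>'. (\<And>i. i < m \<Longrightarrow> \<epsilon> i = \<epsilon>' i) \<Longrightarrow> F \<epsilon> = F \<epsilon>'"
  shows "(\<Sum>\<epsilon>\<in>sign_vectors m. F (\<lambda>i. - \<epsilon> i)) = (\<Sum>\<epsilon>\<in>sign_vectors m. F \<epsilon>)"
proof -
  define r where "r \<epsilon> = restrict (\<lambda>i. - \<epsilon> i) {..<m}" for \<epsilon> :: "nat \<Rightarrow> real"
  have r: "r \<epsilon> \<in> sign_vectors m" "r (r \<epsilon>) = \<epsilon>" if "\<epsilon> \<in> sign_vectors m" for \<epsilon>
  proof -
    show "r \<epsilon> \<in> sign_vectors m"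
      using that unfolding sign_vectors_def r_def restrict_PiE_iff by (auto simp: PiE_iff)
    have "r (r \<epsilon>) = restrict \<epsilon> {..<m}" unfolding r_def by (simp add: restrict_def fun_eq_iff)
    then show "r (r \<epsilon>) = \<epsilon>" using that unfolding sign_vectors_def by (simp add: PiE_restrict)
  qed
  have "(\<Sum>\<epsilon>\<in>sign_vectors m. F (\<lambda>i. - \<epsilon> i)) = (\<Sum>\<epsilon>\<in>sign_vectors m. F (r \<epsilon>))"
    by (intro sum.cong refl assms) (simp add: r_def)
  also have "\<dots> = (\<Sum>\<epsilon>\<in>sign_vectors m. F \<epsilon>)"
    by (rule sum.reindex_bij_witness[where i=r and j=r]) (use r in auto)
  finally show ?thesis .
qed

lemma sample_corr_uminus: "sample_corr m z (\<lambda>i. - \<epsilon> i) g = - sample_corr m z \<epsilon> g"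
  unfolding sample_corr_def by (simp add: sum_negf)

lemma sample_corr_sum:
  "sample_corr m z \<epsilon> (\<lambda>x. \<Sum>i\<in>I. w i * h i x) = (\<Sum>i\<in>I. w i * sample_corr m z \<epsilon> (h i))"
  unfolding sample_corr_def
  by (simp add: sum_distrib_left sum_divide_distrib mult_ac sum.swap[of _ I])

text \<open>Split w into its positive and negative parts: the former is controlled by s,
  the latter by s'.\<close>
lemma sum_affine_le:
  fixes w a :: "'i \<Rightarrow> real"
  assumes "finite I" "sum w I = 1" "\<And>i. i \<in> I \<Longrightarrow> a i \<le> s" "\<And>i. i \<in> I \<Longrightarrow> - a i \<le> s'"
  shows "(\<Sum>i\<in>I. w i * a i) \<le> s + ((\<Sum>i\<in>I. \<bar>w i\<bar>) - 1) / 2 * (s + s')"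
proof -
  have "w i * a i \<le> (\<bar>w i\<bar> + w i) / 2 * s + (\<bar>w i\<bar> - w i) / 2 * s'" if "i \<in> I" for i
  proof (cases "0 \<le> w i")
    case True
    then show ?thesis using mult_left_mono[OF assms(3)[OF that] True] by simp
  next
    case False
    then have "w i * a i \<le> - w i * s'"
      using mult_left_mono[OF assms(4)[OF that], of "- w i"] by simp
    then show ?thesis using False by simp
  qed
  then have "(\<Sum>i\<in>I. w i * a i) \<le> (\<Sum>i\<in>I. (\<bar>w i\<bar> + w i) / 2 * s + (\<bar>w i\<bar> - w i) / 2 * s')"
    by (rule sum_mono)
  also have "\<dots> = ((\<Sum>i\<in>I. \<bar>w i\<bar>) + 1) / 2 * s + ((\<Sum>i\<in>I. \<bar>w i\<bar>) - 1) / 2 * s'"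
    using assms(2) by (simp add: sum.distrib sum_subtractf add_divide_distrib diff_divide_distrib
        flip: sum_divide_distrib sum_distrib_right)
  also have "\<dots> = s + ((\<Sum>i\<in>I. \<bar>w i\<bar>) - 1) / 2 * (s + s')"
    by (simp add: field_simps)
  finally show ?thesis .
qed

lemma sample_corr_le_sup_corr:
  "g \<in> G \<Longrightarrow> bdd_above (sample_corr m z \<epsilon> ` G) \<Longrightarrow> sample_corr m z \<epsilon> g \<le> sup_corr m z G \<epsilon>"
  unfolding sup_corr_def by (rule cSUP_upper)

lemma sup_corr_add_uminus_nonneg:
  assumes "G \<noteq> {}" "\<And>\<epsilon>. bdd_above (sample_corr m z \<epsilon> ` G)"
  shows "0 \<le> sup_corr m z G \<epsilon> + sup_corr m z G (\<lambda>i. - \<epsilon> i)"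
proof -
  obtain g where g: "g \<in> G" using assms(1) by blast
  show ?thesis
    using sample_corr_le_sup_corr[OF g assms(2), of \<epsilon>] sample_corr_le_sup_corr[OF g assms(2), of "\<lambda>i. - \<epsilon> i"]
    by (simp add: sample_corr_uminus)
qed

lemma sum_sup_corr_uminus:
  "(\<Sum>\<epsilon>\<in>sign_vectors m. sup_corr m z G (\<lambda>i. - \<epsilon> i)) = (\<Sum>\<epsilon>\<in>sign_vectors m. sup_corr m z G \<epsilon>)"
  by (rule sum_sign_vectors_uminus) (simp add: sup_corr_def sample_corr_def)

lemma rademacher_nonneg:
  assumes "G \<noteq> {}" "\<And>\<epsilon>. bdd_above (sample_corr m z \<epsilon> ` G)"
  shows "0 \<le> rademacher m z G"
proof -
  have "0 \<le> (\<Sum>\<epsilon>\<in>sign_vectors m. sup_corr m z G \<epsilon> + sup_corr m z G (\<lambda>i. - \<epsilon> i))"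
    using sup_corr_add_uminus_nonneg[OF assms] by (intro sum_nonneg) auto
  then show ?thesis
    unfolding rademacher_eq sum.distrib sum_sup_corr_uminus by simp
qed

lemma sample_corr_quasi_hull_le:
  assumes G0: "G0 \<noteq> {}" "\<And>\<epsilon>. bdd_above (sample_corr m z \<epsilon> ` G0)"
    and g: "g \<in> quasi_hull M G0"
  shows "sample_corr m z \<epsilon> g
    \<le> sup_corr m z G0 \<epsilon> + (M - 1) / 2 * (sup_corr m z G0 \<epsilon> + sup_corr m z G0 (\<lambda>i. - \<epsilon> i))"
proof -
  obtain I :: "nat set" and w h where I: "finite I" "h ` I \<subseteq> G0" "sum w I = 1" "(\<Sum>i\<in>I. \<bar>w i\<bar>) \<le> M"
    and g: "g = (\<lambda>x. \<Sum>i\<in>I. w i * h i x)"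
    using g by (rule quasi_hullE)
  have "sample_corr m z \<epsilon> g = (\<Sum>i\<in>I. w i * sample_corr m z \<epsilon> (h i))"
    unfolding g sample_corr_sum ..
  also have "\<dots> \<le> sup_corr m z G0 \<epsilon>
      + ((\<Sum>i\<in>I. \<bar>w i\<bar>) - 1) / 2 * (sup_corr m z G0 \<epsilon> + sup_corr m z G0 (\<lambda>i. - \<epsilon> i))"
  proof (rule sum_affine_le[OF I(1) I(3)])
    fix i assume "i \<in> I"
    then have h: "h i \<in> G0" using I(2) by blast
    show "sample_corr m z \<epsilon> (h i) \<le> sup_corr m z G0 \<epsilon>"
      by (rule sample_corr_le_sup_corr[OF h G0(2)])
    show "- sample_corr m z \<epsilon> (h i) \<le> sup_corr m z G0 (\<lambda>i. - \<epsilon> i)"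
      unfolding sample_corr_uminus[symmetric] by (rule sample_corr_le_sup_corr[OF h G0(2)])
  qed
  also have "\<dots> \<le> sup_corr m z G0 \<epsilon> + (M - 1) / 2 * (sup_corr m z G0 \<epsilon> + sup_corr m z G0 (\<lambda>i. - \<epsilon> i))"
    using I(4) sup_corr_add_uminus_nonneg[OF G0, of \<epsilon>] by (simp add: mult_right_mono)
  finally show ?thesis .
qed

lemma rademacher_quasi_hull_le:
  assumes G0: "G0 \<noteq> {}" "\<And>\<epsilon>. bdd_above (sample_corr m z \<epsilon> ` G0)"
    and G: "G \<noteq> {}" "G \<subseteq> quasi_hull M G0"
  shows "rademacher m z G \<le> M * rademacher m z G0"
proof -
  let ?s = "sup_corr m z G0"
  have "sup_corr m z G \<epsilon> \<le> ?s \<epsilon> + (M - 1) / 2 * (?s \<epsilon> + ?s (\<lambda>i. - \<epsilon> i))" for \<epsilon>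
    unfolding sup_corr_def[of m z G]
    using G sample_corr_quasi_hull_le[OF G0] by (intro cSUP_least) auto
  then have "rademacher m z G \<le> (\<Sum>\<epsilon>\<in>sign_vectors m. ?s \<epsilon> + (M - 1) / 2 * (?s \<epsilon> + ?s (\<lambda>i. - \<epsilon> i))) / 2 ^ m"
    unfolding rademacher_eq by (intro divide_right_mono sum_mono) auto
  also have "\<dots> = M * rademacher m z G0"
    unfolding rademacher_eq sum.distrib sum_distrib_left[symmetric] sum_sup_corr_uminus
    by (simp add: field_simps)
  finally show ?thesis .
qed

section \<open>Massart's finite class lemma\<close>

lemma exp_add_exp_uminus_le: "exp a + exp (- a) \<le> 2 * exp (a^2 / 2)" for a :: real
proof -
  define h where "h = 2 * \<bar>a\<bar>"
  have "- h * (1/2) + ln (1 + (1/2) * (exp h - 1)) \<le> h\<^sup>2 / 8"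
    using Hoeffdings_lemma_aux[of h "1/2"] by (simp add: h_def)
  moreover have "h\<^sup>2 / 8 = a^2 / 2" unfolding h_def by (simp add: power2_eq_square)
  moreover have "ln ((1 + exp h) / 2) = ln (1 + (1/2) * (exp h - 1))"
    by (rule arg_cong[where f=ln]) (simp add: field_simps)
  ultimately have "ln ((1 + exp h) / 2) \<le> h / 2 + a^2 / 2" by linarith
  then have "(1 + exp h) / 2 \<le> exp (h / 2 + a^2 / 2)"
    by (metis add_pos_pos exp_gt_zero exp_le_cancel_iff exp_ln half_gt_zero zero_less_one)
  then have "exp (- (h/2)) * ((1 + exp h) / 2) \<le> exp (- (h/2)) * exp (h / 2 + a^2 / 2)"
    by (intro mult_left_mono) auto
  also have "\<dots> = exp (a^2 / 2)" by (simp flip: exp_add)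
  also have "exp (- (h/2)) * ((1 + exp h) / 2) = (exp (- (h/2)) + exp (h/2)) / 2"
    by (simp add: field_simps flip: exp_add)
  also have "exp (- (h/2)) + exp (h/2) = exp a + exp (- a)"
    unfolding h_def by (cases "a \<ge> 0") auto
  finally show ?thesis by simp
qed

lemma sum_sign_vectors_exp_le:
  assumes "\<And>i. i < m \<Longrightarrow> \<bar>v i\<bar> \<le> B"
  shows "(\<Sum>\<epsilon>\<in>sign_vectors m. exp (\<Sum>i<m. \<epsilon> i * v i)) \<le> 2 ^ m * exp (real m * B^2 / 2)"
proof -
  have "(\<Sum>\<epsilon>\<in>sign_vectors m. exp (\<Sum>i<m. \<epsilon> i * v i)) = (\<Sum>\<epsilon>\<in>sign_vectors m. \<Prod>i<m. exp (\<epsilon> i * v i))"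
    by (simp add: exp_sum)
  also have "\<dots> = (\<Prod>i<m. \<Sum>e\<in>{-1, 1::real}. exp (e * v i))"
    unfolding sign_vectors_def by (rule prod_sum_PiE[symmetric]) auto
  also have "\<dots> = (\<Prod>i<m. exp (v i) + exp (- v i))"
    by (simp add: add.commute)
  also have "\<dots> \<le> (\<Prod>i<m. 2 * exp (B^2 / 2))"
  proof (rule prod_mono)
    fix i assume "i \<in> {..<m}"
    then have "\<bar>v i\<bar> \<le> B" using assms by simp
    then have "(v i)^2 \<le> B^2" using power_mono[of "\<bar>v i\<bar>" B 2] by simp
    then have "exp ((v i)^2 / 2) \<le> exp (B^2 / 2)" by simp
    then have "exp (v i) + exp (- v i) \<le> 2 * exp (B^2 / 2)"
      using exp_add_exp_uminus_le[of "v i"] by linarith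
    moreover have "0 \<le> exp (v i) + exp (- v i)" by (simp add: add_nonneg_nonneg)
    ultimately show "0 \<le> exp (v i) + exp (- v i) \<and> exp (v i) + exp (- v i) \<le> 2 * exp (B^2 / 2)"
      by simp
  qed
  also have "\<dots> = 2 ^ m * exp (real m * B^2 / 2)"
    by (simp add: power_mult_distrib exp_of_nat_mult[symmetric])
  finally show ?thesis .
qed

lemma massart_exp_bound:
  fixes V :: "(nat \<Rightarrow> real) set"
  assumes "finite V" "V \<noteq> {}" "\<And>v i. v \<in> V \<Longrightarrow> i < m \<Longrightarrow> \<bar>v i\<bar> \<le> B" "0 \<le> t"
  shows "exp (t * ((\<Sum>\<epsilon>\<in>sign_vectors m. Max ((\<lambda>v. \<Sum>i<m. \<epsilon> i * v i) ` V)) / 2 ^ m))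
    \<le> real (card V) * exp (real m * (t * B)^2 / 2)"
proof -
  define X where "X \<epsilon> v = (\<Sum>i<m. \<epsilon> i * v i)" for \<epsilon> v :: "nat \<Rightarrow> real"
  have Max_attained: "\<exists>v\<in>V. Max (X \<epsilon> ` V) = X \<epsilon> v" for \<epsilon>
  proof -
    have "Max (X \<epsilon> ` V) \<in> X \<epsilon> ` V" using assms(1,2) by (intro Max_in) auto
    then show ?thesis by auto
  qed
  have "exp (t * ((\<Sum>\<epsilon>\<in>sign_vectors m. Max (X \<epsilon> ` V)) / 2 ^ m))
      = exp (\<Sum>\<epsilon>\<in>sign_vectors m. (1 / 2 ^ m) *\<^sub>R (t * Max (X \<epsilon> ` V)))"
    by (simp add: sum_distrib_left sum_divide_distrib)
  also have "\<dots> \<le> (\<Sum>\<epsilon>\<in>sign_vectors m. (1 / 2 ^ m) * exp (t * Max (X \<epsilon> ` V)))"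
    using finite_sign_vectors card_sign_vectors[of m]
    by (intro convex_on_sum[OF _ _ exp_convex]) (auto simp: card_gt_0_iff[symmetric])
  also have "\<dots> \<le> (\<Sum>\<epsilon>\<in>sign_vectors m. (1 / 2 ^ m) * (\<Sum>v\<in>V. exp (X \<epsilon> (\<lambda>i. t * v i))))"
  proof (intro sum_mono mult_left_mono)
    fix \<epsilon>
    obtain v where "v \<in> V" "Max (X \<epsilon> ` V) = X \<epsilon> v" using Max_attained by blast
    moreover have "t * X \<epsilon> v = X \<epsilon> (\<lambda>i. t * v i)" unfolding X_def by (simp add: sum_distrib_left mult_ac)
    ultimately show "exp (t * Max (X \<epsilon> ` V)) \<le> (\<Sum>v\<in>V. exp (X \<epsilon> (\<lambda>i. t * v i)))"
      using assms(1) by (auto intro: member_le_sum)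
  qed simp
  also have "\<dots> = (1 / 2 ^ m) * (\<Sum>v\<in>V. \<Sum>\<epsilon>\<in>sign_vectors m. exp (X \<epsilon> (\<lambda>i. t * v i)))"
    by (simp add: sum_distrib_left sum.swap[of _ V])
  also have "\<dots> \<le> (1 / 2 ^ m) * (\<Sum>v\<in>V. 2 ^ m * exp (real m * (t * B)^2 / 2))"
    unfolding X_def using assms(3,4)
    by (intro mult_left_mono sum_mono sum_sign_vectors_exp_le) (auto simp: abs_mult mult_left_mono)
  also have "\<dots> = real (card V) * exp (real m * (t * B)^2 / 2)" by simp
  finally show ?thesis unfolding X_def .
qed

lemma div_sqrt_scale_eq:
  fixes L m B :: real
  assumes "0 < L" "0 < m" "0 < B"
  shows "2 * L / (sqrt (2 * L / m) / B) = B * sqrt (2 * m * L)"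
proof -
  have "sqrt (2 * L / m) * sqrt (2 * m * L) = sqrt ((2 * L)^2)"
    using assms(2) by (simp add: real_sqrt_mult[symmetric] power2_eq_square field_simps)
  also have "\<dots> = 2 * L" using assms(1) real_sqrt_abs[of "2 * L"] by simp
  finally have "2 * L / sqrt (2 * L / m) = sqrt (2 * m * L)"
    using assms(1,2) by (simp add: field_simps)
  moreover have "2 * L / (sqrt (2 * L / m) / B) = B * (2 * L / sqrt (2 * L / m))"
    by (simp add: mult.commute)
  ultimately show ?thesis by simp
qed

lemma massart_finite_class:
  fixes V :: "(nat \<Rightarrow> real) set"
  assumes "finite V" "V \<noteq> {}" "0 < m" "\<And>v i. v \<in> V \<Longrightarrow> i < m \<Longrightarrow> \<bar>v i\<bar> \<le> B"
    and "ln (card V) \<le> L" "0 < L"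
  shows "(\<Sum>\<epsilon>\<in>sign_vectors m. Max ((\<lambda>v. \<Sum>i<m. \<epsilon> i * v i) ` V)) / 2 ^ m \<le> B * sqrt (2 * real m * L)"
    (is "?avg \<le> _")
proof (cases "B = 0")
  case True
  have "(\<Sum>i<m. \<epsilon> i * v i) = 0" if "v \<in> V" for \<epsilon> v
  proof (rule sum.neutral, intro ballI)
    fix i assume "i \<in> {..<m}"
    then have "v i = 0" using assms(4)[OF that] True by simp
    then show "\<epsilon> i * v i = 0" by simp
  qed
  then show ?thesis using True assms(2) by (simp add: image_constant_conv)
next
  case False
  obtain v where "v \<in> V" using assms(2) by blast
  then have B: "0 < B" using False assms(3) assms(4)[of v 0] by linarith
  define t where "t = sqrt (2 * L / real m) / B"
  have t: "0 < t" "(t * B)^2 = 2 * L / real m"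
  proof -
    show "0 < t" unfolding t_def using B assms(3,6) by simp
    have "t * B = sqrt (2 * L / real m)" unfolding t_def using B by simp
    then show "(t * B)^2 = 2 * L / real m" using assms(6) by simp
  qed
  have card: "real (card V) \<le> exp L"
  proof -
    have "real (card V) = exp (ln (card V))" using assms(1,2) by (simp add: card_gt_0_iff)
    also have "\<dots> \<le> exp L" using assms(5) by simp
    finally show ?thesis .
  qed
  have "exp (t * ?avg) \<le> real (card V) * exp (real m * (t * B)^2 / 2)"
    by (rule massart_exp_bound[where t=t]) (use assms t in auto)
  also have "\<dots> = real (card V) * exp L" using t(2) assms(3) by simp
  also have "\<dots> \<le> exp L * exp L" using card by (rule mult_right_mono) simp
  also have "\<dots> = exp (2 * L)" by (simp flip: exp_add)
  finally have "t * ?avg \<le> 2 * L" by simp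
  then have "?avg \<le> 2 * L / t" using t(1) by (simp add: pos_le_divide_eq mult.commute)
  also have "2 * L / t = B * sqrt (2 * real m * L)"
    unfolding t_def using B assms(3,6) by (intro div_sqrt_scale_eq) auto
  finally show ?thesis .
qed

section \<open>Sample vectors of Clifford channels\<close>

definition pauli_Z :: "nat \<Rightarrow> nat \<Rightarrow> cmat" where
  "pauli_Z n j = pauli n 0 0 (2^j)"

lemma pauli_Z_eq_diag_mat:
  assumes "j < n"
  shows "pauli_Z n j = diag_mat (2^n) (\<lambda>i. if bit i j then -1 else 1)"
proof -
  have S: "{j'. j' < n \<and> bit ((2::nat)^j) j' \<and> bit l j'} = (if bit l j then {j} else {})" for l
    using assms by (auto simp: bit_exp_iff)
  have card: "card {j'. j' < n \<and> bit ((2::nat)^j) j' \<and> bit l j'} = (if bit l j then 1 else 0)" for l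
    unfolding S by simp
  show ?thesis unfolding pauli_Z_def pauli_def diag_mat_def card by (auto simp: fun_eq_iff)
qed

lemma pauli_Z_in_pauli_group: "j < n \<Longrightarrow> pauli_Z n j \<in> pauli_group n"
  unfolding pauli_Z_def by (intro pauli_in_pauli_group) (auto intro: power_strict_increasing)

definition pauli_projector :: "nat \<Rightarrow> cmat \<Rightarrow> bool \<Rightarrow> cmat" where
  "pauli_projector N P s = (\<lambda>i l. (1/2) * idm N i l + (if s then -1/2 else 1/2) * P i l)"

fun projector_prod :: "nat \<Rightarrow> (nat \<Rightarrow> cmat) \<Rightarrow> nat \<Rightarrow> nat \<Rightarrow> cmat" where
  "projector_prod N Ps x 0 = idm N"
| "projector_prod N Ps x (Suc j) = mmult N (pauli_projector N (Ps j) (bit x j)) (projector_prod N Ps x j)"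

lemma projector_prod_cong: "(\<And>j. j < k \<Longrightarrow> Ps j = Ps' j) \<Longrightarrow> projector_prod N Ps x k = projector_prod N Ps' x k"
  by (induction k) auto

lemma unitary_channel_projector_prod:
  assumes "unitary_mat N U"
  shows "unitary_channel N U (projector_prod N Ps x k) = projector_prod N (\<lambda>j. unitary_channel N U (Ps j)) x k"
proof -
  have "unitary_channel N U (pauli_projector N P s) = pauli_projector N (unitary_channel N U P) s" for P s
    unfolding pauli_projector_def unitary_channel_lincomb unitary_channel_idm[OF assms] ..
  then show ?thesis
    by (induction k) (simp_all add: unitary_channel_idm[OF assms] unitary_channel_mmult[OF assms])
qed

lemma projector_prod_pauli_Z:
  "k \<le> n \<Longrightarrow> projector_prod (2^n) (pauli_Z n) x k = diag_mat (2^n) (\<lambda>i. \<Prod>j<k. if bit x j = bit i j then 1 else 0)"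
proof (induction k)
  case 0
  then show ?case by (simp add: idm_eq_diag_mat)
next
  case (Suc k)
  then have "k < n" by simp
  then have "pauli_projector (2^n) (pauli_Z n k) (bit x k) = diag_mat (2^n) (\<lambda>i. if bit x k = bit i k then 1 else 0)"
    unfolding pauli_projector_def pauli_Z_eq_diag_mat[OF \<open>k < n\<close>] idm_eq_diag_mat diag_mat_def
    by (auto simp: fun_eq_iff)
  then show ?case
    using Suc by (simp add: mmult_diag_mat_diag_mat mult.commute)
qed

lemma nat_eq_iff_low_bits_eq:
  assumes "(x::nat) < 2^n" "i < 2^n"
  shows "x = i \<longleftrightarrow> (\<forall>j<n. bit x j = bit i j)"
proof -
  have "\<not> bit a j" if "a < 2^n" "n \<le> j" for a :: nat and j
  proof -
    have "a < 2^j" using that by (meson less_le_trans one_le_numeral power_increasing)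
    then show ?thesis by (simp add: bit_iff_odd)
  qed
  with assms show ?thesis by (metis bit_eqI not_le)
qed

lemma ket_bra_eq_projector_prod:
  assumes "x < 2^n" "a < 2^n" "b < 2^n"
  shows "ket_bra x a b = projector_prod (2^n) (pauli_Z n) x n a b"
proof -
  have prod: "(\<Prod>j<n. if bit x j = bit a j then 1 else 0 :: complex) = (if x = a then 1 else 0)"
  proof (cases "x = a")
    case False
    then obtain j where "j < n" "bit x j \<noteq> bit a j"
      using nat_eq_iff_low_bits_eq[OF assms(1,2)] by auto
    then show ?thesis using False by (intro trans[OF prod_zero]) (auto intro!: bexI[of _ j])
  qed simp
  then show ?thesis
    unfolding projector_prod_pauli_Z[OF order_refl] diag_mat_def ket_bra_def prod using assms by auto
qed

definition projector_fun :: "nat \<Rightarrow> (nat \<Rightarrow> cmat) \<Rightarrow> nat \<times> nat \<Rightarrow> real" where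
  "projector_fun n Ps = (\<lambda>(x, y). Re (mtrace (2^n) (mmult (2^n) (projector_prod (2^n) Ps x n) (ket_bra y))))"

text \<open>Conjugating the projectors onto the Z_j eigenspaces by a Clifford unitary gives projectors onto
  the eigenspaces of n Paulis, so a Clifford channel's f is determined by n elements of the Pauli group.\<close>
lemma f_chan_clifford:
  assumes "U \<in> clifford n"
  obtains Ps where "Ps \<in> PiE {..<n} (\<lambda>_. pauli_group n)"
    "\<And>x y. x < 2^n \<Longrightarrow> f_chan n (unitary_channel (2^n) U) (x, y) = projector_fun n Ps (x, y)"
proof
  have U: "unitary_mat (2^n) U" using assms unfolding clifford_iff by blast
  define Ps where "Ps = restrict (\<lambda>j. unitary_channel (2^n) U (pauli_Z n j)) {..<n}"
  show "Ps \<in> PiE {..<n} (\<lambda>_. pauli_group n)"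
    unfolding Ps_def using assms pauli_Z_in_pauli_group unfolding clifford_iff by auto
  fix x y :: nat assume x: "x < 2^n"
  have "unitary_channel (2^n) U (ket_bra x) = unitary_channel (2^n) U (projector_prod (2^n) (pauli_Z n) x n)"
    by (rule unitary_channel_cong) (use ket_bra_eq_projector_prod x in auto)
  also have "\<dots> = projector_prod (2^n) Ps x n"
    unfolding unitary_channel_projector_prod[OF U] by (rule projector_prod_cong) (simp add: Ps_def)
  finally show "f_chan n (unitary_channel (2^n) U) (x, y) = projector_fun n Ps (x, y)"
    unfolding f_chan_def projector_fun_def by simp
qed

lemma finite_pauli_group: "finite (pauli_group n)"
  and card_pauli_group_le: "card (pauli_group n) \<le> 4 * 2^n * 2^n"
proof -
  have eq: "pauli_group n = (\<lambda>(c, a, b). pauli n c a b) ` ({..<4} \<times> {..<2^n} \<times> {..<2^n})"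
    unfolding pauli_group_def by force
  show "finite (pauli_group n)" unfolding eq by simp
  have "card (pauli_group n) \<le> card ({..<4::nat} \<times> {..<2^n::nat} \<times> {..<2^n::nat})"
    unfolding eq by (rule card_image_le) auto
  then show "card (pauli_group n) \<le> 4 * 2^n * 2^n" by (simp add: card_cartesian_product)
qed

definition sample_vec :: "nat \<Rightarrow> (nat \<Rightarrow> nat \<times> nat) \<Rightarrow> (nat \<times> nat \<Rightarrow> real) \<Rightarrow> nat \<Rightarrow> real" where
  "sample_vec m z g = (\<lambda>i. if i < m then g (z i) else 0)"

lemma sample_corr_sample_vec: "sample_corr m z \<epsilon> g = (\<Sum>i<m. \<epsilon> i * sample_vec m z g i) / real m"
  unfolding sample_corr_def sample_vec_def by simp

lemma sample_vec_STAB_subset: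
  assumes "valid_sample n m z"
  shows "sample_vec m z ` F_class n (STAB n)
    \<subseteq> (\<lambda>Ps. sample_vec m z (projector_fun n Ps)) ` PiE {..<n} (\<lambda>_. pauli_group n)"
proof
  fix v assume "v \<in> sample_vec m z ` F_class n (STAB n)"
  then obtain U where U: "U \<in> clifford n" "v = sample_vec m z (f_chan n (unitary_channel (2^n) U))"
    unfolding F_class_def STAB_def by auto
  obtain Ps where Ps: "Ps \<in> PiE {..<n} (\<lambda>_. pauli_group n)"
    "\<And>x y. x < 2^n \<Longrightarrow> f_chan n (unitary_channel (2^n) U) (x, y) = projector_fun n Ps (x, y)"
    using f_chan_clifford[OF U(1)] by blast
  have "f_chan n (unitary_channel (2^n) U) (z i) = projector_fun n Ps (z i)" if "i < m" for i
    using assms Ps(2)[of "fst (z i)" "snd (z i)"] that unfolding valid_sample_def by simp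
  then have "v = sample_vec m z (projector_fun n Ps)"
    unfolding U(2) sample_vec_def by (simp add: fun_eq_iff)
  with Ps(1) show "v \<in> (\<lambda>Ps. sample_vec m z (projector_fun n Ps)) ` PiE {..<n} (\<lambda>_. pauli_group n)"
    by blast
qed

lemma finite_sample_vec_STAB:
  assumes "valid_sample n m z"
  shows "finite (sample_vec m z ` F_class n (STAB n))"
proof (rule finite_subset[OF sample_vec_STAB_subset[OF assms]])
  show "finite ((\<lambda>Ps. sample_vec m z (projector_fun n Ps)) ` PiE {..<n} (\<lambda>_. pauli_group n))"
    by (simp add: finite_PiE finite_pauli_group)
qed

lemma card_sample_vec_STAB_le:
  assumes "valid_sample n m z"
  shows "card (sample_vec m z ` F_class n (STAB n)) \<le> (4 * 2^n * 2^n) ^ n"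
proof -
  have fin: "finite (PiE {..<n} (\<lambda>_. pauli_group n))" by (simp add: finite_PiE finite_pauli_group)
  have "card (sample_vec m z ` F_class n (STAB n)) \<le> card (PiE {..<n} (\<lambda>_. pauli_group n))"
    using card_mono[OF finite_imageI[OF fin] sample_vec_STAB_subset[OF assms]]
      card_image_le[OF fin, of "\<lambda>Ps. sample_vec m z (projector_fun n Ps)"]
    by linarith
  also have "\<dots> \<le> (4 * 2^n * 2^n) ^ n" by (simp add: card_PiE power_mono card_pauli_group_le)
  finally show ?thesis .
qed

lemma F_class_STAB_nonempty: "F_class n (STAB n) \<noteq> {}"
  unfolding F_class_def STAB_def using idm_in_clifford by blast

lemma ln_card_sample_vec_STAB_le:
  assumes "valid_sample n m z"
  shows "ln (card (sample_vec m z ` F_class n (STAB n))) \<le> 4 * real n ^ 2"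
proof -
  let ?c = "card (sample_vec m z ` F_class n (STAB n))"
  have "0 < ?c"
    using finite_sample_vec_STAB[OF assms] F_class_STAB_nonempty by (simp add: card_gt_0_iff)
  moreover have "real ?c \<le> 2 ^ ((2 * n + 2) * n)"
  proof -
    have "(4 * 2^n * 2^n :: nat) = 2 ^ (2 * n + 2)" by (simp add: power_add mult_2)
    then have "(4 * 2^n * 2^n :: nat) ^ n = 2 ^ ((2 * n + 2) * n)" by (simp only: power_mult)
    then show ?thesis using card_sample_vec_STAB_le[OF assms] by (metis of_nat_le_iff of_nat_numeral of_nat_power)
  qed
  ultimately have "ln (real ?c) \<le> real ((2 * n + 2) * n) * ln 2"
    by (metis ln_le_cancel_iff ln_realpow of_nat_0_less_iff zero_less_numeral zero_less_power order_le_less_trans)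
  also have "\<dots> \<le> real ((2 * n + 2) * n)" using ln_2_less_1 by (intro mult_left_le) auto
  also have "\<dots> \<le> 4 * real n ^ 2" by (cases n) (simp_all add: power2_eq_square algebra_simps)
  finally show ?thesis .
qed

lemma bdd_above_sample_corr_STAB:
  assumes "valid_sample n m z"
  shows "bdd_above (sample_corr m z \<epsilon> ` F_class n (STAB n))"
proof -
  have "sample_corr m z \<epsilon> ` F_class n (STAB n)
      = (\<lambda>v. (\<Sum>i<m. \<epsilon> i * v i) / real m) ` sample_vec m z ` F_class n (STAB n)"
    unfolding sample_corr_sample_vec by (simp add: image_image)
  then show ?thesis using finite_sample_vec_STAB[OF assms] by simp
qed

lemma abs_f_chan_le_SUP_sup_norm_vec:
  assumes "valid_sample n m z" "\<Phi> \<in> STAB n" "i < m"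
  shows "\<bar>f_chan n \<Phi> (z i)\<bar> \<le> (SUP \<Psi>\<in>STAB n. sup_norm_vec m z (f_chan n \<Psi>))"
proof -
  have sup_norm: "sup_norm_vec m z g = Max ((\<lambda>i. \<bar>sample_vec m z g i\<bar>) ` {..<m})" for g
    unfolding sup_norm_vec_def sample_vec_def by (intro arg_cong[where f=Max]) auto
  have "(\<lambda>\<Psi>. sup_norm_vec m z (f_chan n \<Psi>)) ` STAB n
      \<subseteq> (\<lambda>v. Max ((\<lambda>i. \<bar>v i\<bar>) ` {..<m})) ` sample_vec m z ` F_class n (STAB n)"
    unfolding sup_norm F_class_def by auto
  then have "bdd_above ((\<lambda>\<Psi>. sup_norm_vec m z (f_chan n \<Psi>)) ` STAB n)"
    using finite_sample_vec_STAB[OF assms(1)] by (meson bdd_above_finite bdd_above_mono finite_imageI)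
  moreover have "\<bar>f_chan n \<Phi> (z i)\<bar> \<le> sup_norm_vec m z (f_chan n \<Phi>)"
    unfolding sup_norm_vec_def using assms(3) by (intro Max_ge) auto
  ultimately show ?thesis by (meson assms(2) cSUP_upper order_trans)
qed

lemma rademacher_STAB_le:
  assumes z: "valid_sample n m z" and n: "1 \<le> n" and m: "1 \<le> m"
  shows "rademacher m z (F_class n (STAB n))
     \<le> sqrt 8 * (real n / sqrt (real m)) * (SUP \<Phi>\<in>STAB n. sup_norm_vec m z (f_chan n \<Phi>))"
proof -
  define V where "V = sample_vec m z ` F_class n (STAB n)"
  define B where "B = (SUP \<Phi>\<in>STAB n. sup_norm_vec m z (f_chan n \<Phi>))"
  define Mx where "Mx \<epsilon> = Max ((\<lambda>v. \<Sum>i<m. \<epsilon> i * v i) ` V)" for \<epsilon> :: "nat \<Rightarrow> real"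
  have V: "finite V" "V \<noteq> {}"
    unfolding V_def using finite_sample_vec_STAB[OF z] F_class_STAB_nonempty by auto
  have B: "\<bar>v i\<bar> \<le> B" if "v \<in> V" "i < m" for v i
    using that abs_f_chan_le_SUP_sup_norm_vec[OF z]
    unfolding V_def B_def F_class_def sample_vec_def by auto
  have "sup_corr m z (F_class n (STAB n)) \<epsilon> \<le> Mx \<epsilon> / real m" for \<epsilon>
    unfolding sup_corr_def
  proof (rule cSUP_least[OF F_class_STAB_nonempty])
    fix g assume "g \<in> F_class n (STAB n)"
    then have "(\<Sum>i<m. \<epsilon> i * sample_vec m z g i) \<le> Mx \<epsilon>"
      unfolding Mx_def using V(1) by (intro Max_ge) (auto simp: V_def)
    then show "sample_corr m z \<epsilon> g \<le> Mx \<epsilon> / real m"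
      unfolding sample_corr_sample_vec by (simp add: divide_right_mono)
  qed
  then have "rademacher m z (F_class n (STAB n)) \<le> (\<Sum>\<epsilon>\<in>sign_vectors m. Mx \<epsilon> / real m) / 2 ^ m"
    unfolding rademacher_eq by (intro divide_right_mono sum_mono) auto
  also have "\<dots> = ((\<Sum>\<epsilon>\<in>sign_vectors m. Mx \<epsilon>) / 2 ^ m) / real m"
    by (simp add: sum_divide_distrib mult.commute)
  also have "\<dots> \<le> B * sqrt (2 * real m * (4 * real n ^ 2)) / real m"
    unfolding Mx_def using V B m n ln_card_sample_vec_STAB_le[OF z]
    by (intro divide_right_mono massart_finite_class) (auto simp: V_def)
  also have "\<dots> = sqrt 8 * (real n / sqrt (real m)) * B"
  proof -
    have "sqrt (2 * real m * (4 * real n ^ 2)) = sqrt 8 * real n * sqrt (real m)"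
      by (simp add: real_sqrt_mult)
    moreover have "real m / sqrt (real m) = sqrt (real m)" by (rule real_div_sqrt) simp
    moreover have "0 < sqrt (real m)" using m by simp
    ultimately show ?thesis by (simp add: field_simps)
  qed
  finally show ?thesis unfolding B_def .
qed

lemma rademacher_STAB_T_le:
  assumes "valid_sample n m z" "0 < n"
  shows "rademacher m z (F_class n (STAB_T n k)) \<le> sqrt 2 ^ k * rademacher m z (F_class n (STAB n))"
proof (rule rademacher_quasi_hull_le[OF F_class_STAB_nonempty bdd_above_sample_corr_STAB[OF assms(1)]])
  have "comp_chans [] \<in> STAB_T n k" unfolding STAB_T_def by auto
  then show "F_class n (STAB_T n k) \<noteq> {}" unfolding F_class_def by blast
  show "F_class n (STAB_T n k) \<subseteq> quasi_hull (sqrt 2 ^ k) (F_class n (STAB n))"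
    using assms(2) by (intro F_class_subset_quasi_hull quasi_stab_decomp_STAB_T)
qed

lemma rademacher_STAB_Phi_T_le:
  assumes "valid_sample n m z" "0 < n"
  shows "rademacher m z (F_class n (STAB n \<union> {Phi_T n})) \<le> sqrt 2 * rademacher m z (F_class n (STAB n))"
proof (rule rademacher_quasi_hull_le[OF F_class_STAB_nonempty bdd_above_sample_corr_STAB[OF assms(1)]])
  show "F_class n (STAB n \<union> {Phi_T n}) \<noteq> {}" unfolding F_class_def by blast
  have "quasi_stab_decomp n (sqrt 2) \<Phi>" if "\<Phi> \<in> STAB n \<union> {Phi_T n}" for \<Phi>
  proof (cases "\<Phi> = Phi_T n")
    case False
    then have "quasi_stab_decomp n 1 \<Phi>" using that by (simp add: quasi_stab_decomp_STAB)
    then show ?thesis by (rule quasi_stab_decomp_mono) simp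
  qed (simp add: quasi_stab_decomp_Phi_T[OF assms(2)])
  then show "F_class n (STAB n \<union> {Phi_T n}) \<subseteq> quasi_hull (sqrt 2) (F_class n (STAB n))"
    by (rule F_class_subset_quasi_hull)
qed

theorem mainTheorem7:
  shows "(\<forall>n\<ge>1. free_robustness (STAB n) (Phi_T n) \<le> sqrt 2 / 2)
    \<and> (\<forall>n m z. n \<ge> 1 \<longrightarrow> m \<ge> 1 \<longrightarrow> valid_sample n m z \<longrightarrow>
         rademacher m z (F_class n (STAB n \<union> {Phi_T n}))
           \<le> (1 + sqrt 2 / 2) * rademacher m z (F_class n (STAB n)))
    \<and> (\<forall>n m z k. n \<ge> 1 \<longrightarrow> m \<ge> 1 \<longrightarrow> valid_sample n m z \<longrightarrow>
         rademacher m z (F_class n (STAB_T n k))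
           \<le> (1 + sqrt 2) ^ k * rademacher m z (F_class n (STAB n)))
    \<and> (\<exists>C::real. \<forall>n m z k. n \<ge> 1 \<longrightarrow> m \<ge> 1 \<longrightarrow> valid_sample n m z \<longrightarrow>
         rademacher m z (F_class n (STAB_T n k))
           \<le> C * (1 + sqrt 2) ^ k * (real n / sqrt (real m))
              * (SUP \<Phi>\<in>STAB n. sup_norm_vec m z (f_chan n \<Phi>)))"
proof -
  have R0: "0 \<le> rademacher m z (F_class n (STAB n))" if "valid_sample n m z" for n m z
    by (rule rademacher_nonneg[OF F_class_STAB_nonempty bdd_above_sample_corr_STAB[OF that]])
  have weaken: "x \<le> a * y \<Longrightarrow> a \<le> b \<Longrightarrow> 0 \<le> y \<Longrightarrow> x \<le> b * y" for x a b y :: real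
    by (meson mult_right_mono order_trans)
  have sqrt2: "sqrt (2::real) \<le> 1 + sqrt 2 / 2" using real_sqrt_le_iff[of 2 4] by simp
  have single: "rademacher m z (F_class n (STAB n \<union> {Phi_T n}))
      \<le> (1 + sqrt 2 / 2) * rademacher m z (F_class n (STAB n))"
    if "1 \<le> n" "valid_sample n m z" for n m z
    by (rule weaken[where a="sqrt 2"]) (use that sqrt2 R0 rademacher_STAB_Phi_T_le in auto)
  have T_gates: "rademacher m z (F_class n (STAB_T n k))
      \<le> (1 + sqrt 2) ^ k * rademacher m z (F_class n (STAB n))"
    if "1 \<le> n" "valid_sample n m z" for n m z k
    by (rule weaken[where a="sqrt 2 ^ k"]) (use that R0 rademacher_STAB_T_le in \<open>auto intro: power_mono\<close>)
  have "rademacher m z (F_class n (STAB_T n k)) \<le> sqrt 8 * (1 + sqrt 2) ^ k * (real n / sqrt (real m))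
      * (SUP \<Phi>\<in>STAB n. sup_norm_vec m z (f_chan n \<Phi>))"
    if "1 \<le> n" "1 \<le> m" "valid_sample n m z" for n m z k
    using order_trans[OF T_gates[OF that(1,3)] mult_left_mono[OF rademacher_STAB_le[OF that(3,1,2)]]]
    by (simp add: mult_ac)
  moreover have "free_robustness (STAB n) (Phi_T n) \<le> sqrt 2 / 2" if "1 \<le> n" for n
    using free_robustness_Phi_T[of n] that by simp
  ultimately show ?thesis using single T_gates by blast
qed

end
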